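(* Consider the switched system $x(t+1)=Ax(t)+\sigma(t)Bu(t)$, with output $y(t)=Cx(t)$ if $\sigma(t)=1$ and no output if $\sigma(t)=0$, where $A\in\mathbb{R}^{n\times n}$ is invertible, $B\in\mathbb{R}^{n\times m}$, $C\in\mathbb{R}^{p\times n}$, and the switching signal $\sigma:\mathbb{N}\to\{0,1\}$ ranges over the admissible signals $\mathcal{L}(\mathcal{A})$ of a given automaton $\mathcal{A}$. Suppose this system is observable. Let $\sigma_1,\sigma_2\in\mathcal{L}(\mathcal{A})$ and, for $i=1,2$, let $t_{\sigma_i}$ be the first time instance $t$ at which the observability matrix $O_{\sigma_i(t)}(C,A)$ has full column rank $n$. If $\sigma_1\preceq\sigma_2$, then $t_{\sigma_1}\ge t_{\sigma_2}$.
   Context: An automaton $\mathcal{A}$ is a directed graph whose edges are labeled by $0$ or $1$; a binary sequence $\sigma(0)\sigma(1)\ldots$ is admissible if there is a path in the graph carrying this sequence as the succession of labels on its edges, and $\mathcal{L}(\mathcal{A})$ is the set of admissible sequences. $\sigma(t)=0$ represents a packet dropout and $\sigma(t)=1$ a successful transmission. For a switching signal $\sigma$ and $t\in\mathbb{N}$, the observability matrix is $O_{\sigma(t)}(C,A)=\begin{bmatrix}\sigma(0)C\\ \sigma(1)CA\\ \vdots\\ \sigma(t)CA^t\end{bmatrix}$. The system is observable if for every $\sigma\in\mathcal{L}(\mathcal{A})$ and any initial states $x_0,\tilde x_0$, equality of the outputs $y(t,x_0,\sigma)=y(t,\tilde x_0,\sigma)$ for all $t\in\mathbb{N}$ implies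 $x_0=\tilde x_0$. Partial order: $\sigma_1\preceq\sigma_2$ if for every $i$ with $\sigma_1(i)=1$ we also have $\sigma_2(i)=1$. *)

theory Defs
  imports "Jordan_Normal_Form.DL_Rank"
begin

text \<open>An automaton: a directed graph whose edges (q, l, q') carry labels l in {0,1}.\<close>
definition label_ok :: "('s \<times> nat \<times> 's) set \<Rightarrow> bool" where
  "label_ok E \<longleftrightarrow> (\<forall>(q, l, q') \<in> E. l \<in> {0, 1})"

definition admissible :: "('s \<times> nat \<times> 's) set \<Rightarrow> (nat \<Rightarrow> nat) set" where
  "admissible E = {\<sigma>. \<exists>q :: nat \<Rightarrow> 's. \<forall>t. (q t, \<sigma> t, q (Suc t)) \<in> E}"

fun traj :: "real mat \<Rightarrow> real mat \<Rightarrow> (nat \<Rightarrow> nat) \<Rightarrow> (nat \<Rightarrow> real vec) \<Rightarrow> real vec \<Rightarrow> nat \<Rightarrow> real vec" where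
  "traj A B \<sigma> u x0 0 = x0"
| "traj A B \<sigma> u x0 (Suc t) = A *\<^sub>v traj A B \<sigma> u x0 t + real (\<sigma> t) \<cdot>\<^sub>v (B *\<^sub>v u t)"

definition sys_output :: "real mat \<Rightarrow> real mat \<Rightarrow> real mat \<Rightarrow> (nat \<Rightarrow> nat) \<Rightarrow> (nat \<Rightarrow> real vec) \<Rightarrow> real vec \<Rightarrow> nat \<Rightarrow> real vec option" where
  "sys_output A B C \<sigma> u x0 t = (if \<sigma> t = 1 then Some (C *\<^sub>v traj A B \<sigma> u x0 t) else None)"

definition observable :: "('s \<times> nat \<times> 's) set \<Rightarrow> real mat \<Rightarrow> real mat \<Rightarrow> real mat \<Rightarrow> bool" where
  "observable E A B C \<longleftrightarrow>
     (\<forall>\<sigma> \<in> admissible E. \<forall>u x0 x0'.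
        x0 \<in> carrier_vec (dim_col A) \<and> x0' \<in> carrier_vec (dim_col A) \<and>
        (\<forall>t. u t \<in> carrier_vec (dim_col B)) \<and>
        (\<forall>t. sys_output A B C \<sigma> u x0 t = sys_output A B C \<sigma> u x0' t) \<longrightarrow> x0 = x0')"

text \<open>Observability matrix O_{sigma(t)}(C,A) = [sigma(0) C; sigma(1) C A; ...; sigma(t) C A^t].\<close>
definition obs_mat :: "real mat \<Rightarrow> real mat \<Rightarrow> (nat \<Rightarrow> nat) \<Rightarrow> nat \<Rightarrow> real mat" where
  "obs_mat C A \<sigma> t = mat (Suc t * dim_row C) (dim_col A)
     (\<lambda>(i, j). real (\<sigma> (i div dim_row C)) * (C * A ^\<^sub>m (i div dim_row C)) $$ (i mod dim_row C, j))"

definition mat_rank :: "real mat \<Rightarrow> nat" where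
  "mat_rank M = vec_space.rank (dim_row M) M"

definition first_full_rank :: "real mat \<Rightarrow> real mat \<Rightarrow> (nat \<Rightarrow> nat) \<Rightarrow> nat" where
  "first_full_rank C A \<sigma> = (LEAST t. mat_rank (obs_mat C A \<sigma> t) = dim_col A)"

definition sig_le :: "(nat \<Rightarrow> nat) \<Rightarrow> (nat \<Rightarrow> nat) \<Rightarrow> bool" where
  "sig_le \<sigma>1 \<sigma>2 \<longleftrightarrow> (\<forall>i. \<sigma>1 i = 1 \<longrightarrow> \<sigma>2 i = 1)"

end

(* The observability matrix O_sigma(t) has full column rank iff the only state annihilated by
   all rows C A^i with i <= t and sigma(i) = 1 is 0.  Passing from sigma1 to a larger signal
   sigma2 only adds rows, so the kernel shrinks and full rank at time t for sigma1 gives full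
   rank at t for sigma2; hence t_sigma2 <= t_sigma1.  It remains to see that t_sigma1 exists:
   the kernels form a decreasing chain of subspaces of R^n, which stabilizes; a nonzero vector
   in the limit would be an initial state whose zero-input output coincides with that of 0,
   contradicting observability. *)
theory Submission
  imports Defs "Jordan_Normal_Form.Matrix_Kernel"
begin

lemma mult_mat_vec_zero:
  assumes "A \<in> carrier_mat nr nc"
  shows "A *\<^sub>v 0\<^sub>v nc = 0\<^sub>v nr"
  using assms by (intro eq_vecI) (auto simp: scalar_prod_def)

lemma zero_mem_mat_kernel:
  assumes "A \<in> carrier_mat nr nc"
  shows "0\<^sub>v nc \<in> mat_kernel A"
  using assms by (auto intro: mat_kernelI mult_mat_vec_zero)

lemma (in vec_space) rank_le_card_cols:
  assumes "A \<in> carrier_mat n nc"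
  shows "rank A \<le> card (set (cols A))"
proof -
  obtain S where S: "maximal S (\<lambda>T. T \<subseteq> set (cols A) \<and> lin_indpt T)"
    using maximal_exists[of "\<lambda>T. T \<subseteq> set (cols A) \<and> lin_indpt T" "card (set (cols A))" "{}"]
    by (meson List.finite_set card_mono empty_iff empty_subsetI finite_lin_indpt2 rev_finite_subset)
  then have "card S \<le> card (set (cols A))" by (simp add: card_mono maximal_def)
  with rank_card_indpt[OF assms S] show ?thesis by simp
qed

lemma (in vec_space) full_rank_distinct_cols:
  assumes A: "A \<in> carrier_mat n nc" and "rank A = nc"
  shows "distinct (cols A)"
proof (rule ccontr)
  assume "\<not> distinct (cols A)"
  then have "card (set (cols A)) < nc"
    using A by (metis card_distinct card_length cols_length carrier_matD(2) nat_less_le)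
  with rank_le_card_cols[OF A] \<open>rank A = nc\<close> show False by simp
qed

lemma trivial_mat_kernel_distinct_cols:
  fixes A :: "'a :: comm_ring_1 mat"
  assumes A: "A \<in> carrier_mat nr nc" and ker: "mat_kernel A = {0\<^sub>v nc}"
  shows "distinct (cols A)"
proof (rule ccontr)
  assume "\<not> distinct (cols A)"
  then obtain i j where ij: "i < nc" "j < nc" "i \<noteq> j" "col A i = col A j"
    using A by (metis cols_length cols_nth carrier_matD(2) distinct_conv_nth)
  have same_entries: "A $$ (r, i) = A $$ (r, j)" if "r < nr" for r
    using arg_cong[OF ij(4), of "\<lambda>c. c $ r"] A ij(1,2) that by simp
  define v :: "'a vec" where "v = unit_vec nc i - unit_vec nc j"
  have "A *\<^sub>v v = 0\<^sub>v nr"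
  proof (rule eq_vecI)
    fix r assume "r < dim_vec (0\<^sub>v nr)"
    then have r: "r < nr" by simp
    have "(A *\<^sub>v v) $ r = row A r \<bullet> unit_vec nc i - row A r \<bullet> unit_vec nc j"
      unfolding v_def using A r by (simp add: scalar_prod_minus_distrib[of _ nc])
    also have "\<dots> = 0" using A r ij same_entries by simp
    finally show "(A *\<^sub>v v) $ r = 0\<^sub>v nr $ r" using r by simp
  qed (use A in simp)
  then have "v \<in> mat_kernel A" using A by (auto simp: v_def intro: mat_kernelI)
  moreover have "v $ i = 1" using ij by (simp add: v_def)
  then have "v \<noteq> 0\<^sub>v nc" using ij by auto
  ultimately show False using ker by blast
qed

lemma (in vec_space) full_rank_iff_trivial_mat_kernel:
  assumes A: "A \<in> carrier_mat n nc"
  shows "rank A = nc \<longleftrightarrow> mat_kernel A = {0\<^sub>v nc}"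
proof
  assume "rank A = nc"
  have d: "distinct (cols A)" using full_rank_distinct_cols[OF A \<open>rank A = nc\<close>] .
  have "lin_indpt (set (cols A))" using full_rank_lin_indpt[OF A \<open>rank A = nc\<close> d] .
  then have "v = 0\<^sub>v nc" if "v \<in> mat_kernel A" for v
    using lin_depI[OF A _ _ _ d] mat_kernelD[OF A that] by blast
  moreover have "0\<^sub>v nc \<in> mat_kernel A" using zero_mem_mat_kernel[OF A] .
  ultimately show "mat_kernel A = {0\<^sub>v nc}" by blast
next
  assume ker: "mat_kernel A = {0\<^sub>v nc}"
  have d: "distinct (cols A)" using trivial_mat_kernel_distinct_cols[OF A ker] .
  have "lin_indpt (set (cols A))"
  proof (rule ccontr)
    assume "\<not> lin_indpt (set (cols A))"
    then obtain v where "v \<in> carrier_vec nc" "v \<noteq> 0\<^sub>v nc" "A *\<^sub>v v = 0\<^sub>v n"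
      using lin_depE[OF A _ d] by blast
    then show False using ker mat_kernelI[OF A] by blast
  qed
  then show "rank A = nc" using lin_indpt_full_rank[OF A d] by blast
qed

lemma (in vec_space) mat_kernel_submodule:
  assumes A: "A \<in> carrier_mat nr n"
  shows "submodule class_ring (mat_kernel A) V"
  unfolding submodule_def mat_kernel[OF A] using module_axioms
  by (auto simp: module_vec_simps class_ring_simps mult_add_distrib_mat_vec[OF A] mult_mat_vec[OF A]
      mult_mat_vec_zero[OF A])

text \<open>The dimension of the span of W, phrased without passing to the subspace structure.\<close>
definition (in vec_space) max_indep_card :: "'a vec set \<Rightarrow> nat" where
  "max_indep_card W = Max {card S | S. S \<subseteq> W \<and> lin_indpt S}"

lemma (in vec_space) indep_cards_finite_nonempty:
  assumes "W \<subseteq> carrier_vec n"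
  shows "finite {card S | S. S \<subseteq> W \<and> lin_indpt S}" "{card S | S. S \<subseteq> W \<and> lin_indpt S} \<noteq> {}"
proof -
  have "{card S | S. S \<subseteq> W \<and> lin_indpt S} \<subseteq> {..n}"
    using assms li_le_dim(2)[OF fin_dim] dim_is_n by fastforce
  then show "finite {card S | S. S \<subseteq> W \<and> lin_indpt S}" by (rule finite_subset) simp
  have "lin_indpt {}" unfolding lin_dep_def by blast
  then show "{card S | S. S \<subseteq> W \<and> lin_indpt S} \<noteq> {}" by blast
qed

lemma (in vec_space) card_le_max_indep_card:
  assumes "W \<subseteq> carrier_vec n" "S \<subseteq> W" "lin_indpt S"
  shows "card S \<le> max_indep_card W"
proof -
  have "card S \<in> {card S | S. S \<subseteq> W \<and> lin_indpt S}" using assms(2,3) by blast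
  then show ?thesis
    unfolding max_indep_card_def using indep_cards_finite_nonempty(1)[OF assms(1)] by (rule Max_ge[rotated])
qed

lemma (in vec_space) max_indep_card_attained:
  assumes "W \<subseteq> carrier_vec n"
  obtains S where "S \<subseteq> W" "lin_indpt S" "card S = max_indep_card W"
proof -
  have "max_indep_card W \<in> {card S | S. S \<subseteq> W \<and> lin_indpt S}"
    unfolding max_indep_card_def using Max_in[OF indep_cards_finite_nonempty[OF assms]] .
  then obtain S where "max_indep_card W = card S" "S \<subseteq> W" "lin_indpt S" by blast
  then show thesis using that by metis
qed

text \<open>A maximal independent subset of the submodule W spans every larger set W' of the
  same independence number, as an outside vector would extend it.\<close>
lemma (in vec_space) submodule_eq_if_max_indep_card_le:
  assumes W: "submodule class_ring W V" and "W \<subseteq> W'" and W': "W' \<subseteq> carrier_vec n"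
    and le: "max_indep_card W' \<le> max_indep_card W"
  shows "W' = W"
proof -
  have W_carrier: "W \<subseteq> carrier_vec n" using \<open>W \<subseteq> W'\<close> W' by (rule order_trans)
  obtain S where S: "S \<subseteq> W" "lin_indpt S" "card S = max_indep_card W"
    using max_indep_card_attained[OF W_carrier] .
  have S_carrier: "S \<subseteq> carrier_vec n" using S(1) W_carrier by (rule order_trans)
  have "W' \<subseteq> span S"
  proof
    fix v assume v: "v \<in> W'"
    show "v \<in> span S"
    proof (rule ccontr)
      assume v_out: "v \<notin> span S"
      then have "v \<notin> S" using in_own_span[OF S_carrier] by blast
      have "v \<in> carrier_vec n" using v W' by blast
      then have "lin_indpt (S \<union> {v})"
        using lin_dep_iff_in_span[OF S_carrier S(2) _ \<open>v \<notin> S\<close>] v_out by simp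
      moreover have "S \<union> {v} \<subseteq> W'" using S(1) \<open>W \<subseteq> W'\<close> v by blast
      ultimately have "card (S \<union> {v}) \<le> max_indep_card W'"
        using card_le_max_indep_card[OF W'] by blast
      moreover have "finite S" using li_le_dim(1)[OF fin_dim S_carrier S(2)] .
      ultimately show False using \<open>v \<notin> S\<close> S(3) le by simp
    qed
  qed
  also have "span S \<subseteq> W" using span_is_subset[OF S(1) W] .
  finally show ?thesis using \<open>W \<subseteq> W'\<close> by blast
qed

lemma (in vec_space) antimono_submodules_stabilize:
  assumes sub: "\<And>t. submodule class_ring (K t) V" and "antimono K"
  obtains T where "\<And>t. T \<le> t \<Longrightarrow> K t = K T"
proof -
  have carrier: "K t \<subseteq> carrier_vec n" for t using sub[of t] unfolding submodule_def by simp
  obtain T where T: "\<And>t. max_indep_card (K T) \<le> max_indep_card (K t)"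
    using ex_has_least_nat[where P = "\<lambda>_. True" and m = "\<lambda>t. max_indep_card (K t)"] by blast
  have "K T = K t" if "T \<le> t" for t
    using submodule_eq_if_max_indep_card_le[OF sub antimonoD[OF \<open>antimono K\<close> that] carrier T] .
  then show thesis using that by metis
qed

lemma all_less_Suc_mult_iff:
  fixes p t :: nat
  shows "(\<forall>i < Suc t * p. P (i div p) (i mod p)) \<longleftrightarrow> (\<forall>k \<le> t. \<forall>r < p. P k r)"
proof
  assume P: "\<forall>i < Suc t * p. P (i div p) (i mod p)"
  show "\<forall>k \<le> t. \<forall>r < p. P k r"
  proof (intro allI impI)
    fix k r assume "k \<le> t" "r < p"
    have "k * p + r < Suc k * p" using \<open>r < p\<close> by simp
    also have "\<dots> \<le> Suc t * p" using \<open>k \<le> t\<close> by (intro mult_le_mono1) simp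
    finally have "k * p + r < Suc t * p" .
    with P have "P ((k * p + r) div p) ((k * p + r) mod p)" by blast
    with \<open>r < p\<close> show "P k r" by simp
  qed
next
  assume P: "\<forall>k \<le> t. \<forall>r < p. P k r"
  show "\<forall>i < Suc t * p. P (i div p) (i mod p)"
  proof (intro allI impI)
    fix i assume i: "i < Suc t * p"
    then have "0 < p" by (cases p) auto
    with i have "i div p \<le> t" "i mod p < p"
      by (simp_all add: div_less_iff_less_mult less_Suc_eq_le[symmetric])
    with P show "P (i div p) (i mod p)" by blast
  qed
qed

lemma obs_mat_carrier:
  assumes "A \<in> carrier_mat n n" "C \<in> carrier_mat p n"
  shows "obs_mat C A \<sigma> t \<in> carrier_mat (Suc t * p) n"
  using assms unfolding obs_mat_def by auto

lemma obs_mat_mult_vec_index: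
  assumes A: "A \<in> carrier_mat n n" and C: "C \<in> carrier_mat p n" and v: "v \<in> carrier_vec n"
    and i: "i < Suc t * p"
  shows "(obs_mat C A \<sigma> t *\<^sub>v v) $ i
     = real (\<sigma> (i div p)) * ((C * A ^\<^sub>m (i div p)) *\<^sub>v v) $ (i mod p)"
proof -
  have "0 < p" using i by (cases p) auto
  then have "(C * A ^\<^sub>m (i div p) *\<^sub>v v) $ (i mod p)
      = (\<Sum>j<n. (C * A ^\<^sub>m (i div p)) $$ (i mod p, j) * v $ j)"
    using A C v by (auto simp: scalar_prod_def atLeast0LessThan intro!: sum.cong)
  moreover have "(obs_mat C A \<sigma> t *\<^sub>v v) $ i
      = (\<Sum>j<n. real (\<sigma> (i div p)) * (C * A ^\<^sub>m (i div p)) $$ (i mod p, j) * v $ j)"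
    using A C v i by (auto simp: obs_mat_def scalar_prod_def atLeast0LessThan intro!: sum.cong)
  ultimately show ?thesis by (simp add: sum_distrib_left mult.assoc)
qed

lemma mat_kernel_obs_mat:
  assumes A: "A \<in> carrier_mat n n" and C: "C \<in> carrier_mat p n"
  shows "mat_kernel (obs_mat C A \<sigma> t)
    = {v \<in> carrier_vec n. \<forall>i\<le>t. \<sigma> i \<noteq> 0 \<longrightarrow> (C * A ^\<^sub>m i) *\<^sub>v v = 0\<^sub>v p}"
proof -
  have "obs_mat C A \<sigma> t *\<^sub>v v = 0\<^sub>v (Suc t * p)
      \<longleftrightarrow> (\<forall>i\<le>t. \<sigma> i \<noteq> 0 \<longrightarrow> (C * A ^\<^sub>m i) *\<^sub>v v = 0\<^sub>v p)"
    if v: "v \<in> carrier_vec n" for v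
  proof -
    have "obs_mat C A \<sigma> t *\<^sub>v v = 0\<^sub>v (Suc t * p)
        \<longleftrightarrow> (\<forall>i < Suc t * p. real (\<sigma> (i div p)) * ((C * A ^\<^sub>m (i div p)) *\<^sub>v v) $ (i mod p) = 0)"
      using obs_mat_carrier[OF A C] by (auto simp: vec_eq_iff obs_mat_mult_vec_index[OF A C v])
    also have "\<dots> \<longleftrightarrow> (\<forall>k \<le> t. \<forall>r < p. real (\<sigma> k) * ((C * A ^\<^sub>m k) *\<^sub>v v) $ r = 0)"
      by (rule all_less_Suc_mult_iff)
    also have "\<dots> \<longleftrightarrow> (\<forall>k\<le>t. \<sigma> k \<noteq> 0 \<longrightarrow> (C * A ^\<^sub>m k) *\<^sub>v v = 0\<^sub>v p)"
      using A C by (auto simp: vec_eq_iff)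
    finally show ?thesis .
  qed
  then show ?thesis using mat_kernel[OF obs_mat_carrier[OF A C]] by auto
qed

lemma obs_mat_full_rank_iff:
  assumes A: "A \<in> carrier_mat n n" and C: "C \<in> carrier_mat p n"
  shows "mat_rank (obs_mat C A \<sigma> t) = n \<longleftrightarrow> mat_kernel (obs_mat C A \<sigma> t) = {0\<^sub>v n}"
  using vec_space.full_rank_iff_trivial_mat_kernel[OF obs_mat_carrier[OF A C]]
  unfolding mat_rank_def carrier_matD(1)[OF obs_mat_carrier[OF A C]] .

lemma obs_mat_full_rank_more_active:
  assumes A: "A \<in> carrier_mat n n" and C: "C \<in> carrier_mat p n"
    and active: "\<And>i. \<sigma>1 i \<noteq> 0 \<Longrightarrow> \<sigma>2 i \<noteq> 0"
    and full: "mat_rank (obs_mat C A \<sigma>1 t) = n"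
  shows "mat_rank (obs_mat C A \<sigma>2 t) = n"
proof -
  have "mat_kernel (obs_mat C A \<sigma>2 t) \<subseteq> mat_kernel (obs_mat C A \<sigma>1 t)"
    unfolding mat_kernel_obs_mat[OF A C] using active by blast
  moreover have "0\<^sub>v n \<in> mat_kernel (obs_mat C A \<sigma>2 t)"
    using zero_mem_mat_kernel[OF obs_mat_carrier[OF A C]] .
  ultimately show ?thesis using full unfolding obs_mat_full_rank_iff[OF A C] by blast
qed

lemma pow_mat_Suc_left:
  assumes "A \<in> carrier_mat n n"
  shows "A ^\<^sub>m Suc k = A * A ^\<^sub>m k"
proof (induction k)
  case (Suc k)
  have "A ^\<^sub>m Suc (Suc k) = (A * A ^\<^sub>m k) * A" using Suc by simp
  also have "\<dots> = A * A ^\<^sub>m Suc k" using assms by (simp add: assoc_mult_mat[of _ n n _ n _ n])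
  finally show ?case .
qed (use assms in simp)

lemma traj_zero_input:
  assumes A: "A \<in> carrier_mat n n" and B: "B \<in> carrier_mat n m" and x0: "x0 \<in> carrier_vec n"
  shows "traj A B \<sigma> (\<lambda>_. 0\<^sub>v m) x0 t = A ^\<^sub>m t *\<^sub>v x0"
proof (induction t)
  case (Suc t)
  have "A ^\<^sub>m t *\<^sub>v x0 \<in> carrier_vec n" using mult_mat_vec_carrier[OF pow_carrier_mat[OF A] x0] .
  moreover have "real (\<sigma> t) \<cdot>\<^sub>v (B *\<^sub>v 0\<^sub>v m) = 0\<^sub>v n"
    unfolding mult_mat_vec_zero[OF B] by (intro eq_vecI) simp_all
  ultimately have "traj A B \<sigma> (\<lambda>_. 0\<^sub>v m) x0 (Suc t) = A *\<^sub>v (A ^\<^sub>m t *\<^sub>v x0)"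
    using Suc A by simp
  also have "\<dots> = A ^\<^sub>m Suc t *\<^sub>v x0"
    using assoc_mult_mat_vec[OF A pow_carrier_mat[OF A] x0] pow_mat_Suc_left[OF A] by simp
  finally show ?case .
qed (use A x0 in simp)

lemma sys_output_zero_input_unobserved:
  assumes A: "A \<in> carrier_mat n n" and B: "B \<in> carrier_mat n m" and C: "C \<in> carrier_mat p n"
    and v: "v \<in> carrier_vec n" and unobserved: "\<And>i. \<sigma> i \<noteq> 0 \<Longrightarrow> (C * A ^\<^sub>m i) *\<^sub>v v = 0\<^sub>v p"
  shows "sys_output A B C \<sigma> (\<lambda>_. 0\<^sub>v m) v t = sys_output A B C \<sigma> (\<lambda>_. 0\<^sub>v m) (0\<^sub>v n) t"
proof (cases "\<sigma> t = 1")
  case True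
  have "C *\<^sub>v (A ^\<^sub>m t *\<^sub>v v) = 0\<^sub>v p"
    using unobserved[of t] True assoc_mult_mat_vec[OF C pow_carrier_mat[OF A] v] by simp
  moreover have "C *\<^sub>v (A ^\<^sub>m t *\<^sub>v 0\<^sub>v n) = 0\<^sub>v p"
    using mult_mat_vec_zero[OF pow_carrier_mat[OF A]] mult_mat_vec_zero[OF C] by simp
  ultimately show ?thesis
    unfolding sys_output_def traj_zero_input[OF A B v] traj_zero_input[OF A B zero_carrier_vec] by simp
qed (simp add: sys_output_def)

lemma observableD:
  assumes "observable E A B C" "\<sigma> \<in> admissible E"
    and "A \<in> carrier_mat n n" "B \<in> carrier_mat n m"
    and "x0 \<in> carrier_vec n" "x0' \<in> carrier_vec n" "\<And>t. u t \<in> carrier_vec m"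
    and "\<And>t. sys_output A B C \<sigma> u x0 t = sys_output A B C \<sigma> u x0' t"
  shows "x0 = x0'"
proof -
  have "dim_col A = n" "dim_col B = m" using assms(3,4) by simp_all
  with assms(1,2,5-8) show ?thesis unfolding observable_def by blast
qed

lemma observable_obs_mat_full_rank:
  assumes A: "A \<in> carrier_mat n n" and B: "B \<in> carrier_mat n m" and C: "C \<in> carrier_mat p n"
    and obs: "observable E A B C" and \<sigma>: "\<sigma> \<in> admissible E"
  obtains t where "mat_rank (obs_mat C A \<sigma> t) = n"
proof -
  interpret vec_space "TYPE(real)" n .
  define K where "K t = mat_kernel (obs_mat C A \<sigma> t)" for t
  have K_iff: "v \<in> K t \<longleftrightarrow> v \<in> carrier_vec n \<and> (\<forall>i\<le>t. \<sigma> i \<noteq> 0 \<longrightarrow> (C * A ^\<^sub>m i) *\<^sub>v v = 0\<^sub>v p)"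
    for v t unfolding K_def mat_kernel_obs_mat[OF A C] by simp
  have sub: "submodule class_ring (K t) V" for t
    unfolding K_def using mat_kernel_submodule[OF obs_mat_carrier[OF A C]] .
  have "antimono K"
  proof (rule antimonoI)
    fix t s :: nat assume "t \<le> s"
    then show "K s \<le> K t" by (auto simp: K_iff)
  qed
  then obtain T where T: "\<And>t. T \<le> t \<Longrightarrow> K t = K T"
    using antimono_submodules_stabilize[of K, OF sub] by blast
  have "K T \<subseteq> {0\<^sub>v n}"
  proof
    fix v assume "v \<in> K T"
    then have v: "v \<in> carrier_vec n" by (simp add: K_iff)
    have "(C * A ^\<^sub>m i) *\<^sub>v v = 0\<^sub>v p" if "\<sigma> i \<noteq> 0" for i
    proof -
      have "v \<in> K (max i T)" using T[of "max i T"] \<open>v \<in> K T\<close> by simp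
      then show ?thesis using that by (simp add: K_iff)
    qed
    then have "sys_output A B C \<sigma> (\<lambda>_. 0\<^sub>v m) v t = sys_output A B C \<sigma> (\<lambda>_. 0\<^sub>v m) (0\<^sub>v n) t" for t
      by (rule sys_output_zero_input_unobserved[OF A B C v])
    then have "v = 0\<^sub>v n" by (rule observableD[OF obs \<sigma> A B v zero_carrier_vec, rotated]) simp
    then show "v \<in> {0\<^sub>v n}" by simp
  qed
  moreover have "0\<^sub>v n \<in> K T"
    unfolding K_def using zero_mem_mat_kernel[OF obs_mat_carrier[OF A C]] .
  ultimately have "K T = {0\<^sub>v n}" by blast
  then show thesis using that obs_mat_full_rank_iff[OF A C] by (simp add: K_def)
qed

lemma admissible_label_01:
  assumes "label_ok E" and "\<sigma> \<in> admissible E"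
  shows "\<sigma> i \<in> {0, 1}"
proof -
  obtain q where "\<forall>t. (q t, \<sigma> t, q (Suc t)) \<in> E" using assms(2) unfolding admissible_def by blast
  then have "(q i, \<sigma> i, q (Suc i)) \<in> E" by blast
  with assms(1) show ?thesis unfolding label_ok_def by auto
qed

theorem mainTheorem1:
  fixes E :: "('s \<times> nat \<times> 's) set"
    and A B C :: "real mat" and n m p :: nat
    and \<sigma>1 \<sigma>2 :: "nat \<Rightarrow> nat"
  assumes "label_ok E"
    and "A \<in> carrier_mat n n" and "invertible_mat A"
    and "B \<in> carrier_mat n m" and "C \<in> carrier_mat p n"
    and "observable E A B C"
    and "\<sigma>1 \<in> admissible E" and "\<sigma>2 \<in> admissible E"
    and "sig_le \<sigma>1 \<sigma>2"
  shows "first_full_rank C A \<sigma>1 \<ge> first_full_rank C A \<sigma>2"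
proof -
  note A = assms(2) and B = assms(4) and C = assms(5)
  let ?full = "\<lambda>\<sigma> t. mat_rank (obs_mat C A \<sigma> t) = n"
  have first_full_rank: "first_full_rank C A \<sigma> = (LEAST t. ?full \<sigma> t)" for \<sigma>
    using A by (simp add: first_full_rank_def)
  have active: "\<sigma>2 i \<noteq> 0" if "\<sigma>1 i \<noteq> 0" for i
    using that admissible_label_01[OF assms(1,7), of i] assms(9) unfolding sig_le_def by auto
  obtain t where "?full \<sigma>1 t"
    using observable_obs_mat_full_rank[OF A B C assms(6,7)] .
  then have full1: "?full \<sigma>1 (first_full_rank C A \<sigma>1)"
    unfolding first_full_rank by (rule LeastI)
  have "?full \<sigma>2 (first_full_rank C A \<sigma>1)"
    using active full1 by (rule obs_mat_full_rank_more_active[OF A C])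
  then show ?thesis unfolding first_full_rank by (rule Least_le)
qed

end
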